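(* Let $x\in\{0,1,2,3\}^n$. Let $x'$ be the subsequence of $x$ obtained by deleting all $1$'s and $3$'s, and $x''$ the subsequence obtained by deleting all $0$'s and $2$'s. If every maximal run of $0$'s in $x'$ and every maximal run of $3$'s in $x''$ has length at most $\log n+3$, then $x$ is regular.
   Context: Logarithms are base $2$. Define the weight $w:\{0,1,2,3\}\to\mathbb{R}$ by $w(0)=0$, $w(1)=1$, $w(2)=2\log n+11$, $w(3)=2\log n+12$. A string $x\in\{0,1,2,3\}^n$ is regular if for every symbol $a\in\{0,1,2,3\}$ and all $1\le j\le k\le n$ such that some $i\in[j,k]$ has $x_i\ne a$, it holds that $\sum_{i=j}^k (w(x_i)-w(a))\neq 0$. *)

theory Defs
  imports Complex_Main
begin

text \<open>Strings x in {0,1,2,3}^n are lists of naturals with entries in {0..3};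
  n is the length. Positions are 0-indexed (x_i for 1 <= i <= n is xs ! (i-1)).\<close>

definition wt :: "nat \<Rightarrow> nat \<Rightarrow> real" where
  "wt n a = (if a = 0 then 0 else if a = 1 then 1
             else if a = 2 then 2 * log 2 (real n) + 11
             else 2 * log 2 (real n) + 12)"

definition regular :: "nat list \<Rightarrow> bool" where
  "regular xs \<longleftrightarrow> (let n = length xs in
     \<forall>a \<in> {0..3::nat}. \<forall>j k. j \<le> k \<and> k < n \<and> (\<exists>i\<in>{j..k}. xs ! i \<noteq> a) \<longrightarrow>
       (\<Sum>i = j..k. wt n (xs ! i) - wt n a) \<noteq> 0)"

definition max_run :: "nat \<Rightarrow> nat list \<Rightarrow> nat \<Rightarrow> nat \<Rightarrow> bool" where
  "max_run a ys i l \<longleftrightarrow> 0 < l \<and> i + l \<le> length ys \<and>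
     (\<forall>t \<in> {i..<i+l}. ys ! t = a) \<and>
     (i = 0 \<or> ys ! (i - 1) \<noteq> a) \<and>
     (i + l = length ys \<or> ys ! (i + l) \<noteq> a)"

end

theory Submission
  imports Defs "HOL-Library.Sublist"
begin

text \<open>Write \<open>c\<^sub>v\<close> for the number of occurrences of the symbol \<open>v\<close> in a window
  \<open>x\<^sub>j \<dots> x\<^sub>k\<close> and \<open>L = log n\<close>; the window sum for the symbol \<open>a\<close> is
  \<open>\<Sum>\<^sub>v c\<^sub>v (w v - w a)\<close>. For \<open>a = 0\<close> and \<open>a = 3\<close> all terms have the same sign and
  one of them is nonzero. For \<open>a = 1\<close> the only negative term is \<open>-c\<^sub>0\<close>; but in \<open>x'\<close>
  the window becomes a stretch in which the \<open>c\<^sub>2\<close> twos separate at most \<open>c\<^sub>2 + 1\<close>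
  blocks of zeros, each inside a maximal run, so \<open>c\<^sub>0 \<le> (c\<^sub>2 + 1)(L + 3)\<close>, which the
  weight \<open>2L + 10\<close> of each two (or \<open>2L + 11\<close> of a single three) outweighs; if the window
  has neither twos nor threes the sum is \<open>-c\<^sub>0 < 0\<close>. The case \<open>a = 2\<close> is symmetric,
  using \<open>x''\<close>.\<close>

lemma filter_mono_sublist: "sublist xs ys \<Longrightarrow> sublist (filter P xs) (filter P ys)"
  by (metis filter_mono_prefix filter_mono_suffix sublist_altdef)

lemma count_list_filter: "P a \<Longrightarrow> count_list (filter P xs) a = count_list xs a"
  by (induction xs) auto

lemma takeWhile_eq_replicate:
  "takeWhile (\<lambda>c. c = a) xs = replicate (length (takeWhile (\<lambda>c. c = a) xs)) a"
  by (metis (mono_tags) replicate_length_same set_takeWhileD)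

lemma sum_nth_atLeastAtMost_eq_sum_list:
  assumes "k < length xs"
  shows "(\<Sum>i = j..k. f (xs ! i)) = sum_list (map f (drop j (take (Suc k) xs)))"
proof -
  have "drop j (take (Suc k) xs) = map ((!) xs) [j..<Suc k]"
    using assms by (intro nth_equalityI) (auto simp del: upt_Suc)
  then show ?thesis
    by (simp add: interv_sum_list_conv_sum_set_nat atLeastLessThanSuc_atLeastAtMost
        comp_def del: upt_Suc)
qed

lemma sum_list_map_eq_sum_count_list:
  fixes f :: "'a \<Rightarrow> 'b::semiring_1"
  assumes "set xs \<subseteq> A" and "finite A"
  shows "sum_list (map f xs) = (\<Sum>u\<in>A. of_nat (count_list xs u) * f u)"
  using assms(1)
proof (induction xs)
  case (Cons x xs)
  have "(\<Sum>u\<in>A. of_nat (count_list (x # xs) u) * f u)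
      = (\<Sum>u\<in>A. (if x = u then f u else 0)) + (\<Sum>u\<in>A. of_nat (count_list xs u) * f u)"
    unfolding sum.distrib[symmetric] by (intro sum.cong) (auto simp: distrib_right)
  also have "\<dots> = f x + sum_list (map f xs)"
    using Cons assms(2) by simp
  finally show ?case by simp
qed simp

lemma replicate_block_in_max_run:
  assumes "zs = p @ replicate l a @ s" and "0 < l"
  shows "\<exists>i l'. max_run a zs i l' \<and> l \<le> l'"
  using assms
proof (induction "length p + length s" arbitrary: p l s rule: less_induct)
  case less
  show ?case
  proof (cases "p \<noteq> [] \<and> last p = a")
    case True
    then obtain q where "p = q @ [a]"
      by (metis append_butlast_last_id)
    then have "zs = q @ replicate (Suc l) a @ s"
      using less.prems(1) by simp
    moreover have "length q + length s < length p + length s"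
      using \<open>p = q @ [a]\<close> by simp
    ultimately obtain i l' where "max_run a zs i l'" "Suc l \<le> l'"
      using less.hyps by blast
    then show ?thesis by (auto dest: Suc_leD)
  next
    case not_left: False
    show ?thesis
    proof (cases "s \<noteq> [] \<and> hd s = a")
      case True
      then obtain t where "s = a # t"
        by (metis list.collapse)
      then have "zs = p @ replicate (Suc l) a @ t"
        using less.prems(1) by (simp add: replicate_app_Cons_same)
      moreover have "length p + length t < length p + length s"
        using \<open>s = a # t\<close> by simp
      ultimately obtain i l' where "max_run a zs i l'" "Suc l \<le> l'"
        using less.hyps by blast
      then show ?thesis by (auto dest: Suc_leD)
    next
      case not_right: False
      have "max_run a zs (length p) l"
        unfolding max_run_def
      proof (intro conjI)
        show "length p = 0 \<or> zs ! (length p - 1) \<noteq> a"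
        proof (cases "p = []")
          case False
          then have "zs ! (length p - 1) = last p"
            using less.prems(1) by (simp add: nth_append last_conv_nth)
          then show ?thesis using not_left False by simp
        qed simp
        show "length p + l = length zs \<or> zs ! (length p + l) \<noteq> a"
        proof (cases "s = []")
          case False
          then have "zs ! (length p + l) = hd s"
            using less.prems(1) by (simp add: nth_append hd_conv_nth)
          then show ?thesis using not_right False by simp
        qed (simp add: less.prems(1))
      qed (use less.prems in \<open>auto simp: nth_append\<close>)
      then show ?thesis by blast
    qed
  qed
qed

lemma length_takeWhile_le_block_bound:
  fixes B :: real
  assumes "\<And>l. 0 < l \<Longrightarrow> sublist (replicate l a) xs \<Longrightarrow> real l \<le> B" and "0 \<le> B"
  shows "real (length (takeWhile (\<lambda>c. c = a) xs)) \<le> B"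
proof (cases "takeWhile (\<lambda>c. c = a) xs = []")
  case False
  then show ?thesis using assms(1)[of "length (takeWhile (\<lambda>c. c = a) xs)"]
    by (simp flip: takeWhile_eq_replicate)
qed (simp add: \<open>0 \<le> B\<close>)

lemma count_list_le_block_bound:
  fixes B :: real
  assumes blocks: "\<And>l. 0 < l \<Longrightarrow> sublist (replicate l a) xs \<Longrightarrow> real l \<le> B" and "0 \<le> B"
  shows "real (count_list xs a) \<le> (real (length (filter (\<lambda>c. c \<noteq> a) xs)) + 1) * B"
proof -
  \<comment> \<open>the \<open>a\<close>'s form a leading block plus one block after each other symbol\<close>
  have "real (count_list xs a) \<le> real (length (filter (\<lambda>c. c \<noteq> a) xs)) * B
      + real (length (takeWhile (\<lambda>c. c = a) xs))"
    using blocks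
  proof (induction xs)
    case (Cons x xs)
    have blocks_xs: "real l \<le> B" if "0 < l" "sublist (replicate l a) xs" for l
      using Cons.prems that by (simp add: sublist_Cons_right)
    show ?case
    proof (cases "x = a")
      case False
      have "real (length (takeWhile (\<lambda>c. c = a) xs)) \<le> B"
        using length_takeWhile_le_block_bound[OF blocks_xs \<open>0 \<le> B\<close>] .
      then show ?thesis using Cons.IH[OF blocks_xs] False by (simp add: algebra_simps)
    qed (use Cons.IH[OF blocks_xs] in simp)
  qed simp
  also have "real (length (takeWhile (\<lambda>c. c = a) xs)) \<le> B"
    using length_takeWhile_le_block_bound[OF blocks \<open>0 \<le> B\<close>] .
  finally show ?thesis by (simp add: algebra_simps)
qed

lemma count_list_le_max_run_bound:
  fixes B :: real
  assumes runs: "\<forall>i l. max_run a zs i l \<longrightarrow> real l \<le> B" and "0 \<le> B" and "sublist xs zs"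
  shows "real (count_list xs a) \<le> (real (length (filter (\<lambda>c. c \<noteq> a) xs)) + 1) * B"
proof (rule count_list_le_block_bound[OF _ \<open>0 \<le> B\<close>])
  fix l :: nat
  assume "0 < l" and "sublist (replicate l a) xs"
  have "sublist (replicate l a) zs"
    using \<open>sublist (replicate l a) xs\<close> \<open>sublist xs zs\<close> by (rule sublist_order.order.trans)
  then obtain p s where "zs = p @ replicate l a @ s"
    unfolding sublist_def by blast
  then obtain i l' where "max_run a zs i l'" "l \<le> l'"
    using replicate_block_in_max_run \<open>0 < l\<close> by blast
  then show "real l \<le> B" using runs by force
qed

lemma count_list_le_filtered_max_run_bound:
  fixes B :: real
  assumes "\<forall>i l. max_run a (filter P zs) i l \<longrightarrow> real l \<le> B" and "0 \<le> B"
    and "sublist xs zs" and "P a" and "\<And>x. x \<in> set xs \<Longrightarrow> P x \<and> x \<noteq> a \<longleftrightarrow> x = b"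
  shows "real (count_list xs a) \<le> (real (count_list xs b) + 1) * B"
proof -
  have "count_list (filter P xs) a = count_list xs a"
    using \<open>P a\<close> by (rule count_list_filter)
  moreover have "filter (\<lambda>c. c \<noteq> a) (filter P xs) = filter ((=) b) xs"
    unfolding filter_filter by (rule filter_cong) (use assms(5) in auto)
  then have "length (filter (\<lambda>c. c \<noteq> a) (filter P xs)) = count_list xs b"
    by (simp add: count_list_eq_length_filter)
  ultimately show ?thesis
    using count_list_le_max_run_bound[OF assms(1,2) filter_mono_sublist[OF assms(3)]] by simp
qed

lemma weighted_count_sum_nonzero:
  fixes c :: "nat \<Rightarrow> nat"
  assumes "1 \<le> n"
    and bound0: "real (c 0) \<le> (real (c 2) + 1) * (log 2 n + 3)"
    and bound3: "real (c 3) \<le> (real (c 1) + 1) * (log 2 n + 3)"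
    and "a \<le> 3" and "v \<le> 3" "v \<noteq> a" "0 < c v"
  shows "(\<Sum>u\<in>{0,1,2,3}. real (c u) * (wt n u - wt n a)) \<noteq> 0"
proof -
  define L where "L = log 2 (real n)"
  define C where "C u = real (c u)" for u
  have "0 \<le> L" using \<open>1 \<le> n\<close> by (simp add: L_def)
  have w: "wt n 0 = 0" "wt n 1 = 1" "wt n 2 = 2 * L + 11" "wt n 3 = 2 * L + 12"
    by (simp_all add: wt_def L_def)
  have sum_eq: "(\<Sum>u\<in>{0,1,2,3}. real (c u) * (wt n u - wt n a))
      = C 1 + C 2 * (2 * L + 11) + C 3 * (2 * L + 12) - (C 0 + C 1 + C 2 + C 3) * wt n a"
    by (simp add: C_def w algebra_simps del: One_nat_def)
  have C_nonneg: "0 \<le> C u" and CL_nonneg: "0 \<le> L * C u" for u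
    using \<open>0 \<le> L\<close> by (simp_all add: C_def)
  have bound0': "C 0 \<le> (C 2 + 1) * (L + 3)" and bound3': "C 3 \<le> (C 1 + 1) * (L + 3)"
    using bound0 bound3 by (simp_all add: C_def L_def)
  have C_pos: "1 \<le> C u" "L \<le> L * C u" if "0 < c u" for u
    using \<open>0 \<le> L\<close> that by (simp_all add: C_def mult_le_cancel_left1)
  have "a = 0 \<or> a = 1 \<or> a = 2 \<or> a = 3" "v = 0 \<or> v = 1 \<or> v = 2 \<or> v = 3"
    using \<open>a \<le> 3\<close> \<open>v \<le> 3\<close> by auto
  then consider
      "a = 0" "0 < c 1 \<or> 0 < c 2 \<or> 0 < c 3"
    | "a = 3" "0 < c 0 \<or> 0 < c 1 \<or> 0 < c 2"
    | "a = 1" "0 < c 2 \<or> 0 < c 3"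
    | "a = 1" "c 2 = 0" "c 3 = 0" "0 < c 0"
    | "a = 2" "0 < c 0 \<or> 0 < c 1"
    | "a = 2" "c 0 = 0" "c 1 = 0" "0 < c 3"
    using \<open>v \<noteq> a\<close> \<open>0 < c v\<close> by (elim disjE) auto
  then show ?thesis
  proof cases
    case 1
    have "0 < C 1 + 11 * C 2 + 12 * C 3"
      using 1(2) C_pos(1)[of 1] C_pos(1)[of 2] C_pos(1)[of 3] C_nonneg[of 1] C_nonneg[of 2]
        C_nonneg[of 3] by smt
    also have "\<dots> \<le> C 1 + C 2 * (2 * L + 11) + C 3 * (2 * L + 12)"
      using CL_nonneg[of 2] CL_nonneg[of 3] by (simp add: algebra_simps)
    finally show ?thesis
      using sum_eq w(1) 1(1) by simp
  next
    case 2
    have "0 < 12 * C 0 + 11 * C 1 + C 2"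
      using 2(2) C_pos(1)[of 0] C_pos(1)[of 1] C_pos(1)[of 2] C_nonneg[of 0] C_nonneg[of 1]
        C_nonneg[of 2] by smt
    also have "\<dots> \<le> C 0 * (2 * L + 12) + C 1 * (2 * L + 11) + C 2"
      using CL_nonneg[of 0] CL_nonneg[of 1] by (simp add: algebra_simps)
    finally show ?thesis
      using sum_eq w(4) 2(1) by (simp add: algebra_simps)
  next
    case 3
    have "C 0 < C 2 * (2 * L + 10) + C 3 * (2 * L + 11)"
      using 3(2)
    proof (elim disjE)
      assume "0 < c 2"
      then show ?thesis
        using bound0' C_pos[of 2] C_nonneg[of 3]
        by (simp add: algebra_simps del: One_nat_def) (use CL_nonneg[of 3] \<open>0 \<le> L\<close> in linarith)
    next
      assume "0 < c 3"
      then show ?thesis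
        using bound0' C_pos[of 3] C_nonneg[of 2]
        by (simp add: algebra_simps del: One_nat_def) (use CL_nonneg[of 2] \<open>0 \<le> L\<close> in linarith)
    qed
    then show ?thesis
      using sum_eq w(2) 3(1) by (simp add: algebra_simps)
  next
    case 4
    then show ?thesis
      using sum_eq w(2) C_pos(1)[of 0] by (simp add: C_def)
  next
    case 5
    have "C 3 < C 0 * (2 * L + 11) + C 1 * (2 * L + 10)"
      using 5(2)
    proof (elim disjE)
      assume "0 < c 0"
      then show ?thesis
        using bound3' C_pos[of 0] C_nonneg[of 1]
        by (simp add: algebra_simps del: One_nat_def) (use CL_nonneg[of 1] \<open>0 \<le> L\<close> in linarith)
    next
      assume "0 < c 1"
      then show ?thesis
        using bound3' C_pos[of 1] C_nonneg[of 0]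
        by (simp add: algebra_simps del: One_nat_def) (use CL_nonneg[of 0] \<open>0 \<le> L\<close> in linarith)
    qed
    then show ?thesis
      using sum_eq w(3) 5(1) by (simp add: algebra_simps)
  next
    case 6
    then show ?thesis
      using sum_eq w(3) C_pos(1)[of 3] by (simp add: C_def algebra_simps)
  qed
qed

theorem lemma1:
  fixes xs :: "nat list"
  assumes "set xs \<subseteq> {0..3}"
    and "\<forall>i l. max_run 0 (filter (\<lambda>c. c \<noteq> 1 \<and> c \<noteq> 3) xs) i l
                \<longrightarrow> real l \<le> log 2 (real (length xs)) + 3"
    and "\<forall>i l. max_run 3 (filter (\<lambda>c. c \<noteq> 0 \<and> c \<noteq> 2) xs) i l
                \<longrightarrow> real l \<le> log 2 (real (length xs)) + 3"
  shows "regular xs"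
  unfolding regular_def Let_def
proof (intro ballI allI impI)
  fix a j k
  assume "a \<in> {0..3::nat}" and jk: "j \<le> k \<and> k < length xs \<and> (\<exists>i\<in>{j..k}. xs ! i \<noteq> a)"
  define n where "n = length xs"
  define window where "window = drop j (take (Suc k) xs)"
  have "1 \<le> n"
    using jk by (simp add: n_def)
  then have B_nonneg: "0 \<le> log 2 (real n) + 3"
    by simp
  have "sublist window xs"
    unfolding window_def by (metis sublist_drop sublist_order.order.trans sublist_take)
  then have window_set: "set window \<subseteq> {0,1,2,3}"
    using assms(1) set_mono_sublist by fastforce
  have bound0: "real (count_list window 0) \<le> (real (count_list window 2) + 1) * (log 2 n + 3)"
    using assms(2)[folded n_def] B_nonneg \<open>sublist window xs\<close>
    by (rule count_list_le_filtered_max_run_bound) (use window_set in auto)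
  have bound3: "real (count_list window 3) \<le> (real (count_list window 1) + 1) * (log 2 n + 3)"
    using assms(3)[folded n_def] B_nonneg \<open>sublist window xs\<close>
    by (rule count_list_le_filtered_max_run_bound) (use window_set in auto)
  obtain i where "j \<le> i" "i \<le> k" "xs ! i \<noteq> a"
    using jk by auto
  then have "window ! (i - j) = xs ! i" "i - j < length window"
    using jk by (auto simp: window_def)
  then have "xs ! i \<in> set window"
    by (metis nth_mem)
  then have "xs ! i \<le> 3" "0 < count_list window (xs ! i)"
    using window_set count_list_0_iff[of window "xs ! i"] by auto
  have "(\<Sum>i = j..k. wt n (xs ! i) - wt n a) = sum_list (map (\<lambda>u. wt n u - wt n a) window)"
    using jk sum_nth_atLeastAtMost_eq_sum_list[of k xs "\<lambda>u. wt n u - wt n a" j]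
    by (simp add: window_def)
  also have "\<dots> = (\<Sum>u\<in>{0,1,2,3}. real (count_list window u) * (wt n u - wt n a))"
    using window_set by (rule sum_list_map_eq_sum_count_list) simp
  also have "\<dots> \<noteq> 0"
    using weighted_count_sum_nonzero[OF \<open>1 \<le> n\<close> bound0 bound3] \<open>a \<in> {0..3}\<close>
      \<open>xs ! i \<le> 3\<close> \<open>xs ! i \<noteq> a\<close> \<open>0 < count_list window (xs ! i)\<close> by simp
  finally show "(\<Sum>i = j..k. wt (length xs) (xs ! i) - wt (length xs) a) \<noteq> 0"
    by (simp add: n_def)
qed

end
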